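(* Let $n\ge1$ and let $f_1,\dots,f_n:\mathbb{R}^d\to\mathbb{R}$ be infinitely differentiable functions whose derivatives of all orders (including order zero) are bounded and integrable, and such that $|f_i(x)|\le C_i(1+|x|^{2d})^{-1}$ for all $x\in\mathbb{R}^d$ and $i=1,\dots,n$, for constants $C_i<\infty$. Let $\xi$ be an $\mathbb{R}^d$-valued random variable with characteristic function $\varphi$, and let $s=\circledast_{i=1}^n\{\overline{\mathcal{F}[f_i]}\,\varphi\}$. Then $s\in L^1(\mathbb{R}^d)$, $\mathcal{F}[s](x)=\prod_{i=1}^n\mathbb{E}[f_i(x+\xi)]$ for all $x\in\mathbb{R}^d$, and $\sup_{y\in\mathbb{R}^d}|y|^k|s(y)|<\infty$ for every $k\in\mathbb{N}$.
   Context: $\varphi(t)=\mathbb{E}[e^{2\pi\mathbf{i}t\cdot\xi}]$; $\mathcal{F}[g](k)=\int g(x)e^{2\pi\mathbf{i}k\cdot x}dx$. For functions $g_1,\dots,g_n$, $\circledast_{i=1}^1 g_i=g_1$ and $\circledast_{i=1}^n g_i=g_n\ast\{\circledast_{i=1}^{n-1}g_i\}$ with $(g\ast h)(y)=\int g(z)h(y-z)dz$. *)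

theory Defs
  imports "HOL-Probability.Probability"
begin

fun iter_pd :: "'a::euclidean_space list \<Rightarrow> ('a \<Rightarrow> real) \<Rightarrow> 'a \<Rightarrow> real" where
  "iter_pd [] f = f"
| "iter_pd (v # vs) f = (\<lambda>x. frechet_derivative (iter_pd vs f) (at x) v)"

definition smooth_bdd_int :: "('a::euclidean_space \<Rightarrow> real) \<Rightarrow> bool" where
  "smooth_bdd_int f \<longleftrightarrow>
     (\<forall>vs \<in> lists Basis.
        (\<forall>x. iter_pd vs f differentiable (at x))
      \<and> bounded (range (iter_pd vs f))
      \<and> integrable lborel (iter_pd vs f))"

definition charfun :: "'w measure \<Rightarrow> ('w \<Rightarrow> 'a::euclidean_space) \<Rightarrow> 'a \<Rightarrow> complex" where
  "charfun M \<xi> t = (\<integral>\<omega>. exp (2 * pi * \<i> * complex_of_real (t \<bullet> \<xi> \<omega>)) \<partial>M)"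

definition fourier :: "('a::euclidean_space \<Rightarrow> complex) \<Rightarrow> 'a \<Rightarrow> complex" where
  "fourier g k = (\<integral>x. g x * exp (2 * pi * \<i> * complex_of_real (k \<bullet> x)) \<partial>lborel)"

definition conv :: "('a::euclidean_space \<Rightarrow> complex) \<Rightarrow> ('a \<Rightarrow> complex) \<Rightarrow> 'a \<Rightarrow> complex" where
  "conv g h y = (\<integral>z. g z * h (y - z) \<partial>lborel)"

text \<open>Iterated convolution: bigconv g 1 = g 1, bigconv g (n+1) = g (n+1) * bigconv g n.
  (The value at 0 is an irrelevant default.)\<close>
fun bigconv :: "(nat \<Rightarrow> 'a::euclidean_space \<Rightarrow> complex) \<Rightarrow> nat \<Rightarrow> 'a \<Rightarrow> complex" where
  "bigconv g 0 = (\<lambda>_. 0)"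
| "bigconv g (Suc 0) = g 1"
| "bigconv g (Suc (Suc n)) = conv (g (Suc (Suc n))) (bigconv g (Suc n))"

end

theory Submission
  imports Defs
begin

text \<open>Each factor \<open>g\<^sub>i = cnj (F f\<^sub>i) \<phi>\<close> is rapidly decreasing: comparing \<open>f\<^sub>i\<close>
  and its derivatives with their translates shows that \<open>|k \<bullet> b|\<^sup>m |F f\<^sub>i(k)|\<close> is
  bounded for every coordinate \<open>b\<close> and order \<open>m\<close>, and \<open>|\<phi>| \<le> 1\<close>. Rapid decay survives
  convolution (split \<open>|y|\<^sup>k \<le> 2\<^sup>k (|z|\<^sup>k + |y - z|\<^sup>k)\<close>), so \<open>s\<close> is integrable with
  bounded moments, and by the convolution theorem \<open>F s\<close> is the product of the \<open>F g\<^sub>i\<close>.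
  Finally \<open>F g\<^sub>i(x) = E f\<^sub>i(x + \<xi>)\<close>: exchanging expectation and frequency integral
  reduces this to Fourier inversion for \<open>f\<^sub>i\<close>, which follows by damping with a
  Gaussian, the fixed point of the Fourier transform.\<close>

definition e2pi :: "real \<Rightarrow> complex" where
  "e2pi t = exp (2 * pi * \<i> * complex_of_real t)"

lemma norm_e2pi [simp]: "norm (e2pi t) = 1"
  unfolding e2pi_def by (simp add: norm_exp_eq_Re)

lemma e2pi_0 [simp]: "e2pi 0 = 1"
  unfolding e2pi_def by simp

lemma e2pi_add: "e2pi (a + b) = e2pi a * e2pi b"
  unfolding e2pi_def by (simp add: distrib_left exp_add[symmetric])

lemma e2pi_sum: "finite A \<Longrightarrow> e2pi (\<Sum>i\<in>A. f i) = (\<Prod>i\<in>A. e2pi (f i))"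
  by (induct A rule: finite_induct) (auto simp: e2pi_add)

lemma cnj_e2pi: "cnj (e2pi t) = e2pi (- t)"
  unfolding e2pi_def by (simp add: exp_cnj)

lemma e2pi_half: "e2pi (1/2) = -1" "e2pi (- (1/2)) = -1"
  unfolding e2pi_def
  by (simp_all add: exp_eq_polar cis_conv_exp[symmetric] cis.ctr complex_eq_iff)

lemma continuous_on_e2pi [continuous_intros]: "continuous_on A e2pi"
  unfolding e2pi_def by (intro continuous_intros)

lemma borel_measurable_e2pi [measurable]: "e2pi \<in> borel_measurable borel"
  using continuous_on_e2pi by (rule borel_measurable_continuous_onI)

lemma fourier_e2pi: "fourier g k = (\<integral>x. g x * e2pi (k \<bullet> x) \<partial>lborel)"
  unfolding fourier_def e2pi_def ..

lemma charfun_e2pi: "charfun M X t = (\<integral>\<omega>. e2pi (t \<bullet> X \<omega>) \<partial>M)"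
  unfolding charfun_def e2pi_def ..

lemma nn_integral_lborel_affine:
  fixes f :: "'a::euclidean_space \<Rightarrow> ennreal"
  assumes [measurable]: "f \<in> borel_measurable borel" and c: "c \<noteq> 0"
  shows "(\<integral>\<^sup>+x. f x \<partial>lborel) = ennreal (\<bar>c\<bar> ^ DIM('a)) * (\<integral>\<^sup>+x. f (t + c *\<^sub>R x) \<partial>lborel)"
  by (subst lborel_affine[OF c, of t])
     (simp add: nn_integral_density nn_integral_distr nn_integral_cmult)

lemma integrable_lborel_affine:
  fixes f :: "'a::euclidean_space \<Rightarrow> 'b::{banach, second_countable_topology}"
  assumes f: "integrable lborel f" and c: "c \<noteq> 0"
  shows "integrable lborel (\<lambda>x. f (t + c *\<^sub>R x))"
  using f f[THEN borel_measurable_integrable] c unfolding integrable_iff_bounded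
  by (subst (asm) nn_integral_lborel_affine[where c=c and t=t]) (auto simp: ennreal_mult_less_top)

lemma integrable_lborel_affine_iff:
  fixes f :: "'a::euclidean_space \<Rightarrow> 'b::{banach, second_countable_topology}"
  assumes c: "c \<noteq> 0"
  shows "integrable lborel (\<lambda>x. f (t + c *\<^sub>R x)) \<longleftrightarrow> integrable lborel f"
proof
  assume "integrable lborel (\<lambda>x. f (t + c *\<^sub>R x))"
  from integrable_lborel_affine[OF this, of "1/c" "- t /\<^sub>R c"] c show "integrable lborel f"
    by (simp add: algebra_simps)
qed (rule integrable_lborel_affine[OF _ c])

lemma integral_lborel_affine:
  fixes f :: "'a::euclidean_space \<Rightarrow> 'b::{banach, second_countable_topology}"
  assumes c: "c \<noteq> 0"
  shows "(\<integral>x. f x \<partial>lborel) = (\<bar>c\<bar> ^ DIM('a)) *\<^sub>R (\<integral>x. f (t + c *\<^sub>R x) \<partial>lborel)"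
proof cases
  assume f[measurable]: "integrable lborel f"
  then show ?thesis
    using c f[THEN borel_measurable_integrable] f[THEN integrable_lborel_affine, of c t]
    by (subst lborel_affine[OF c, of t]) (simp add: integral_density integral_distr)
next
  assume "\<not> integrable lborel f"
  with c show ?thesis
    by (simp add: integrable_lborel_affine_iff not_integrable_integral_eq)
qed

lemma integral_lborel_translate:
  fixes f :: "'a::euclidean_space \<Rightarrow> 'b::{banach, second_countable_topology}"
  shows "(\<integral>x. f (x + t) \<partial>lborel) = (\<integral>x. f x \<partial>lborel)"
  using integral_lborel_affine[of 1 f t] by (simp add: add.commute)

lemma integral_lborel_reflect:
  fixes f :: "'a::euclidean_space \<Rightarrow> 'b::{banach, second_countable_topology}"
  shows "(\<integral>x. f (t - x) \<partial>lborel) = (\<integral>x. f x \<partial>lborel)"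
  using integral_lborel_affine[of "-1" f t] by simp

lemma integrable_lborel_translate:
  fixes f :: "'a::euclidean_space \<Rightarrow> 'b::{banach, second_countable_topology}"
  shows "integrable lborel f \<Longrightarrow> integrable lborel (\<lambda>x. f (x + t))"
  using integrable_lborel_affine[of f 1 t] by (simp add: add.commute)

lemma integrable_lborel_reflect:
  fixes f :: "'a::euclidean_space \<Rightarrow> 'b::{banach, second_countable_topology}"
  shows "integrable lborel f \<Longrightarrow> integrable lborel (\<lambda>x. f (t - x))"
  using integrable_lborel_affine[of f "-1" t] by simp

lemma
  fixes g :: "'a::euclidean_space \<Rightarrow> real \<Rightarrow> 'c::{real_normed_field, banach, second_countable_topology}"
  assumes int: "\<And>b. b \<in> Basis \<Longrightarrow> integrable lborel (g b)"
  shows integrable_lborel_prod_Basis: "integrable lborel (\<lambda>x::'a. \<Prod>b\<in>Basis. g b (x \<bullet> b))"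
    and integral_lborel_prod_Basis:
      "(\<integral>x. (\<Prod>b\<in>Basis. g b (x \<bullet> b)) \<partial>lborel) = (\<Prod>b\<in>Basis. integral\<^sup>L lborel (g b))"
proof -
  interpret product_sigma_finite "\<lambda>_::'a. lborel :: real measure" by unfold_locales
  have coords: "(\<lambda>f. \<Sum>b\<in>Basis. f b *\<^sub>R (b::'a)) \<in> measurable (\<Pi>\<^sub>M b\<in>Basis. lborel) borel"
    by measurable
  have eq: "(\<Prod>b\<in>Basis. g b ((\<Sum>b'\<in>Basis. f b' *\<^sub>R b') \<bullet> b)) = (\<Prod>b\<in>Basis. g b (f b))" for f
    by (intro prod.cong refl) (simp add: inner_sum_left inner_Basis if_distrib cong: if_cong)
  have "(\<lambda>x::'a. \<Prod>b\<in>Basis. g b (x \<bullet> b)) \<in> borel_measurable borel"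
    using int by (intro borel_measurable_prod) (auto dest!: borel_measurable_integrable)
  note distr_eqs = integrable_distr_eq[OF coords this] integral_distr[OF coords this]
  show "integrable lborel (\<lambda>x::'a. \<Prod>b\<in>Basis. g b (x \<bullet> b))"
    by (subst lborel_eq) (simp add: distr_eqs eq product_integrable_prod int)
  show "(\<integral>x. (\<Prod>b\<in>Basis. g b (x \<bullet> b)) \<partial>lborel) = (\<Prod>b\<in>Basis. integral\<^sup>L lborel (g b))"
    by (subst lborel_eq) (simp add: distr_eqs eq product_integral_prod int)
qed

lemma Fubini_integral_swap:
  fixes F :: "'a \<Rightarrow> 'b \<Rightarrow> 'c::{banach, second_countable_topology}"
  assumes "sigma_finite_measure M1" "sigma_finite_measure M2"
    and "(\<lambda>(x, y). F x y) \<in> borel_measurable (M1 \<Otimes>\<^sub>M M2)"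
    and "integrable M1 (\<lambda>x. \<integral>y. norm (F x y) \<partial>M2)"
    and "AE x in M1. integrable M2 (F x)"
  shows "(\<integral>x. (\<integral>y. F x y \<partial>M2) \<partial>M1) = (\<integral>y. (\<integral>x. F x y \<partial>M1) \<partial>M2)"
proof -
  interpret pair_sigma_finite M1 M2
    using assms(1,2) by (simp add: pair_sigma_finite_def)
  have "integrable (M1 \<Otimes>\<^sub>M M2) (\<lambda>(x, y). F x y)"
    by (rule Fubini_integrable) (use assms(3-5) in auto)
  then show ?thesis
    by (rule Fubini_integral[symmetric])
qed

section \<open>The Gaussian\<close>

definition gaussian :: "'a::euclidean_space \<Rightarrow> real" where
  "gaussian v = exp (- pi * (norm v)\<^sup>2)"

lemma gaussian_pos: "gaussian v > 0"
  unfolding gaussian_def by simp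

lemma gaussian_le_1: "gaussian v \<le> 1"
  unfolding gaussian_def by simp

lemma gaussian_minus [simp]: "gaussian (- v) = gaussian v"
  unfolding gaussian_def by simp

lemma continuous_on_gaussian [continuous_intros]: "continuous_on A gaussian"
  unfolding gaussian_def by (intro continuous_intros)

lemma isCont_gaussian: "isCont gaussian x"
  unfolding gaussian_def by (intro continuous_intros)

lemma borel_measurable_gaussian [measurable]: "gaussian \<in> borel_measurable borel"
  using continuous_on_gaussian by (rule borel_measurable_continuous_onI)

lemma gaussian_eq_prod_Basis: "gaussian v = (\<Prod>b\<in>Basis. exp (- pi * (v \<bullet> b)\<^sup>2))"
proof -
  have "(norm v)\<^sup>2 = (\<Sum>b\<in>Basis. (v \<bullet> b)\<^sup>2)"
    unfolding power2_norm_eq_inner by (subst euclidean_inner) (simp add: power2_eq_square)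
  then show ?thesis
    unfolding gaussian_def by (simp add: sum_distrib_left exp_sum)
qed

lemma integrable_gaussian: "integrable lborel (gaussian :: 'a::euclidean_space \<Rightarrow> real)"
proof -
  have "exp (- pi * v\<^sup>2) = normal_density 0 (1 / sqrt (2 * pi)) v" for v
    unfolding normal_density_def by (simp add: power_divide real_sqrt_mult power_mult_distrib)
  then have "integrable lborel (\<lambda>v::real. exp (- pi * v\<^sup>2))"
    by simp
  then show ?thesis
    unfolding gaussian_eq_prod_Basis[abs_def] by (rule integrable_lborel_prod_Basis)
qed

text \<open>In dimension one this is the characteristic function of the standard normal
  distribution after the substitution \<open>x = sqrt (2 pi) v\<close>.\<close>
lemma fourier_gaussian_real:
  "fourier (\<lambda>v::real. complex_of_real (exp (- pi * v\<^sup>2))) w = complex_of_real (exp (- pi * w\<^sup>2))"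
proof -
  define s where "s = sqrt (2 * pi)"
  have s: "s > 0" "s * s = 2 * pi" "s\<^sup>2 = 2 * pi"
    by (auto simp: s_def power2_eq_square)
  have density: "std_normal_density (s * v) = exp (- pi * v\<^sup>2) / s" for v
    using s unfolding std_normal_density_def by (simp add: s_def power_mult_distrib)
  have phase: "iexp (s * w * (s * v)) = e2pi (w * v)" for v
  proof -
    have "s * w * (s * v) = 2 * pi * (w * v)"
      using s(2) by (simp add: algebra_simps)
    then have "iexp (s * w * (s * v)) = iexp (2 * pi * (w * v))"
      by (rule arg_cong)
    then show ?thesis
      unfolding e2pi_def by (simp add: algebra_simps)
  qed
  have "complex_of_real (exp (- pi * w\<^sup>2)) = char std_normal_distribution (s * w)"
    using s by (simp add: char_std_normal_distribution power_mult_distrib)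
  also have "\<dots> = (\<integral>x. std_normal_density x *\<^sub>R iexp (s * w * x) \<partial>lborel)"
    unfolding char_def by (subst integral_density) auto
  also have "\<dots> = \<bar>s\<bar> *\<^sub>R (\<integral>v. std_normal_density (0 + s * v) *\<^sub>R iexp (s * w * (0 + s * v)) \<partial>lborel)"
    by (rule lborel_integral_real_affine) (use s in auto)
  also have "\<dots> = \<bar>s\<bar> *\<^sub>R (\<integral>v. (1/s) *\<^sub>R (complex_of_real (exp (- pi * v\<^sup>2)) * e2pi (w * v)) \<partial>lborel)"
    by (simp only: add_0_left density phase) (simp add: scaleR_conv_of_real)
  also have "\<dots> = fourier (\<lambda>v::real. complex_of_real (exp (- pi * v\<^sup>2))) w"
    using s by (simp add: fourier_e2pi)
  finally show ?thesis ..
qed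

lemma fourier_gaussian:
  "fourier (\<lambda>v. complex_of_real (gaussian v)) w = complex_of_real (gaussian (w::'a::euclidean_space))"
proof -
  let ?g = "\<lambda>b x. complex_of_real (exp (- pi * x\<^sup>2)) * e2pi ((w \<bullet> b) * x)"
  have int: "integrable lborel (?g b)" for b
    by (rule Bochner_Integration.integrable_bound[OF integrable_gaussian[where 'a=real]])
       (auto simp: norm_mult gaussian_def)
  have "complex_of_real (gaussian v) * e2pi (w \<bullet> v) = (\<Prod>b\<in>Basis. ?g b (v \<bullet> b))" for v
    by (simp add: gaussian_eq_prod_Basis prod.distrib euclidean_inner[of w v] e2pi_sum)
  then have "fourier (\<lambda>v. complex_of_real (gaussian v)) w = (\<Prod>b\<in>Basis. integral\<^sup>L lborel (?g b))"
    unfolding fourier_e2pi by (simp only: integral_lborel_prod_Basis[of ?g, OF int])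
  also have "\<dots> = (\<Prod>b\<in>Basis. complex_of_real (exp (- pi * (w \<bullet> b)\<^sup>2)))"
    by (simp only: fourier_gaussian_real[unfolded fourier_e2pi inner_real_def])
  also have "\<dots> = complex_of_real (gaussian w)"
    by (simp only: gaussian_eq_prod_Basis of_real_prod)
  finally show ?thesis .
qed

lemma integral_gaussian: "(\<integral>v. gaussian (v::'a::euclidean_space) \<partial>lborel) = 1"
  using fourier_gaussian[of "0::'a"] by (simp add: fourier_e2pi gaussian_def)

lemma fourier_gaussian_scaled:
  fixes w :: "'a::euclidean_space"
  assumes r: "r > 0"
  shows "fourier (\<lambda>k. complex_of_real (gaussian (r *\<^sub>R k))) w
         = complex_of_real ((1/r) ^ DIM('a) * gaussian ((1/r) *\<^sub>R w))"
proof -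
  have "fourier (\<lambda>k. complex_of_real (gaussian (r *\<^sub>R k))) w
      = \<bar>1/r\<bar> ^ DIM('a) *\<^sub>R fourier (\<lambda>v. complex_of_real (gaussian v)) ((1/r) *\<^sub>R w)"
    unfolding fourier_e2pi using r by (subst integral_lborel_affine[of "1/r" _ 0]) auto
  then show ?thesis
    using r by (simp add: fourier_gaussian scaleR_conv_of_real)
qed

lemma borel_measurable_conv [measurable]:
  assumes [measurable]: "g \<in> borel_measurable borel" "h \<in> borel_measurable borel"
  shows "conv g h \<in> borel_measurable borel"
  unfolding conv_def[abs_def] by measurable

lemma fourier_conv:
  fixes g h :: "'a::euclidean_space \<Rightarrow> complex"
  assumes g: "integrable lborel g" and h: "integrable lborel h"
  shows "fourier (conv g h) x = fourier g x * fourier h x"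
proof -
  note [measurable] = borel_measurable_integrable[OF g] borel_measurable_integrable[OF h]
  have inner: "(\<integral>y. g z * h (y - z) * e2pi (x \<bullet> y) \<partial>lborel) = g z * e2pi (x \<bullet> z) * fourier h x" for z
  proof -
    have "(\<integral>y. g z * h (y - z) * e2pi (x \<bullet> y) \<partial>lborel)
        = (\<integral>y. g z * e2pi (x \<bullet> z) * (h (y - z) * e2pi (x \<bullet> (y - z))) \<partial>lborel)"
      by (intro Bochner_Integration.integral_cong refl)
         (simp add: inner_diff_right e2pi_add[symmetric] algebra_simps)
    then show ?thesis
      unfolding fourier_e2pi
      using integral_lborel_translate[of "\<lambda>y. h y * e2pi (x \<bullet> y)" "- z"] by simp
  qed
  have "fourier (conv g h) x = (\<integral>y. (\<integral>z. g z * h (y - z) * e2pi (x \<bullet> y) \<partial>lborel) \<partial>lborel)"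
    unfolding fourier_e2pi conv_def by simp
  also have "\<dots> = (\<integral>z. (\<integral>y. g z * h (y - z) * e2pi (x \<bullet> y) \<partial>lborel) \<partial>lborel)"
  proof (rule Fubini_integral_swap[symmetric])
    have "(\<integral>y. norm (g z * h (y - z) * e2pi (x \<bullet> y)) \<partial>lborel) = norm (g z) * (\<integral>y. norm (h y) \<partial>lborel)" for z
      using integral_lborel_translate[of "\<lambda>y. norm (h y)" "- z"] by (simp add: norm_mult)
    then show "integrable lborel (\<lambda>z. \<integral>y. norm (g z * h (y - z) * e2pi (x \<bullet> y)) \<partial>lborel)"
      using g by simp
    have "integrable lborel (\<lambda>y. g z * h (y - z) * e2pi (x \<bullet> y))" for z
    proof (rule Bochner_Integration.integrable_bound)
      show "integrable lborel (\<lambda>y. norm (g z) * norm (h (y - z)))"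
        using integrable_lborel_translate[OF h, of "- z"]
        by (intro integrable_mult_right integrable_norm) simp
    qed (auto simp: norm_mult)
    then show "AE z in lborel. integrable lborel (\<lambda>y. g z * h (y - z) * e2pi (x \<bullet> y))"
      by simp
  qed (simp_all add: lborel.sigma_finite_measure_axioms)
  also have "\<dots> = fourier g x * fourier h x"
    unfolding inner fourier_e2pi[of g] by simp
  finally show ?thesis .
qed

section \<open>Rapidly decreasing functions\<close>

definition rapidly_decreasing :: "('a::real_normed_vector \<Rightarrow> 'b::real_normed_vector) \<Rightarrow> bool" where
  "rapidly_decreasing g \<longleftrightarrow>
     g \<in> borel_measurable borel \<and> (\<forall>k. \<exists>C. \<forall>y. norm y ^ k * norm (g y) \<le> C)"

lemma rapidly_decreasing_measurable [measurable_dest]: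
  "rapidly_decreasing g \<Longrightarrow> g \<in> borel_measurable borel"
  unfolding rapidly_decreasing_def by auto

lemma rapidly_decreasingD: "rapidly_decreasing g \<Longrightarrow> \<exists>C. \<forall>y. norm y ^ k * norm (g y) \<le> C"
  unfolding rapidly_decreasing_def by simp

lemma rapidly_decreasing_bounded: "rapidly_decreasing g \<Longrightarrow> \<exists>C. \<forall>y. norm (g y) \<le> C"
  using rapidly_decreasingD[of g 0] by simp

lemma rapidly_decreasing_scaleR_norm_power:
  fixes g :: "'a::real_normed_vector \<Rightarrow> 'b::{real_normed_vector, second_countable_topology}"
  shows "rapidly_decreasing g \<Longrightarrow> rapidly_decreasing (\<lambda>y. norm y ^ k *\<^sub>R g y)"
  unfolding rapidly_decreasing_def
proof (elim conjE, intro conjI allI)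
  fix m assume "g \<in> borel_measurable borel"
  then show "(\<lambda>y. norm y ^ k *\<^sub>R g y) \<in> borel_measurable borel" by measurable
  assume "\<forall>k. \<exists>C. \<forall>y. norm y ^ k * norm (g y) \<le> C"
  then obtain C where "\<forall>y. norm y ^ (m + k) * norm (g y) \<le> C" by blast
  then show "\<exists>C. \<forall>y. norm y ^ m * norm (norm y ^ k *\<^sub>R g y) \<le> C"
    by (intro exI[of _ C]) (simp add: power_add mult.assoc)
qed

lemma rapidly_decreasing_mult_bounded:
  fixes g h :: "'a::real_normed_vector \<Rightarrow> 'b::{real_normed_field, second_countable_topology}"
  assumes g: "rapidly_decreasing g" and [measurable]: "h \<in> borel_measurable borel"
    and h: "\<And>y. norm (h y) \<le> 1"
  shows "rapidly_decreasing (\<lambda>y. g y * h y)"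
  unfolding rapidly_decreasing_def
proof (intro conjI allI)
  show "(\<lambda>y. g y * h y) \<in> borel_measurable borel"
    using g by measurable
  fix m
  obtain C where C: "\<And>y. norm y ^ m * norm (g y) \<le> C"
    using rapidly_decreasingD[OF g] by blast
  have "norm y ^ m * norm (g y * h y) \<le> C" for y
  proof -
    have "norm y ^ m * norm (g y * h y) = norm y ^ m * norm (g y) * norm (h y)"
      by (simp add: norm_mult)
    also have "\<dots> \<le> norm y ^ m * norm (g y)"
      by (intro mult_left_le h) simp
    finally show ?thesis using C[of y] by simp
  qed
  then show "\<exists>C. \<forall>y. norm y ^ m * norm (g y * h y) \<le> C" by blast
qed

text \<open>A majorant of rapidly decreasing functions that is a product over the coordinates,
  so that its integrability reduces to dimension one.\<close>
definition cauchy_weight :: "'a::euclidean_space \<Rightarrow> real" where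
  "cauchy_weight y = (\<Prod>b\<in>Basis. inverse (1 + (y \<bullet> b)\<^sup>2))"

lemma cauchy_weight_pos: "cauchy_weight y > 0"
  unfolding cauchy_weight_def by (intro prod_pos) (auto intro: add_pos_nonneg)

lemma integrable_cauchy_weight: "integrable lborel (cauchy_weight :: 'a::euclidean_space \<Rightarrow> real)"
proof -
  have "integrable lborel (\<lambda>x::real. inverse (1 + x\<^sup>2))"
    using integrable_inverse_1_plus_square by (simp add: set_integrable_def)
  then show ?thesis
    unfolding cauchy_weight_def[abs_def] by (rule integrable_lborel_prod_Basis)
qed

lemma one_plus_power_le: "(a::real) \<ge> 0 \<Longrightarrow> (1 + a) ^ n \<le> 2 ^ n * (1 + a ^ n)"
proof (cases "a \<le> 1")
  case True
  assume "a \<ge> 0"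
  then have "(1 + a) ^ n \<le> 2 ^ n" using True by (intro power_mono) auto
  also have "\<dots> \<le> 2 ^ n * (1 + a ^ n)" using \<open>a \<ge> 0\<close> by simp
  finally show ?thesis .
next
  case False
  then have "(1 + a) ^ n \<le> (2 * a) ^ n" by (intro power_mono) auto
  also have "\<dots> \<le> 2 ^ n * (1 + a ^ n)" by (simp add: power_mult_distrib)
  finally show ?thesis .
qed

lemma inverse_cauchy_weight_le:
  "inverse (cauchy_weight y) \<le> 2 ^ DIM('a) * (1 + norm (y::'a::euclidean_space) ^ (2 * DIM('a)))"
proof -
  have "inverse (cauchy_weight y) = (\<Prod>b\<in>Basis. 1 + (y \<bullet> b)\<^sup>2)"
    unfolding cauchy_weight_def by (simp add: prod_inversef[symmetric])
  also have "\<dots> \<le> (\<Prod>b\<in>(Basis::'a set). 1 + (norm y)\<^sup>2)"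
  proof (rule prod_mono)
    fix b :: 'a assume "b \<in> Basis"
    then have "(y \<bullet> b)\<^sup>2 \<le> (norm y)\<^sup>2"
      using Basis_le_norm by (metis abs_le_square_iff abs_norm_cancel)
    then show "0 \<le> 1 + (y \<bullet> b)\<^sup>2 \<and> 1 + (y \<bullet> b)\<^sup>2 \<le> 1 + (norm y)\<^sup>2" by simp
  qed
  also have "\<dots> \<le> 2 ^ DIM('a) * (1 + ((norm y)\<^sup>2) ^ DIM('a))"
    by (simp add: one_plus_power_le)
  finally show ?thesis by (simp add: power_mult)
qed

lemma rapidly_decreasing_le_cauchy_weight:
  fixes g :: "'a::euclidean_space \<Rightarrow> 'b::real_normed_vector"
  assumes "rapidly_decreasing g"
  obtains K where "\<And>y. norm (g y) \<le> K * cauchy_weight y"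
proof -
  obtain C0 where C0: "\<And>y. norm (g y) \<le> C0"
    using rapidly_decreasing_bounded[OF assms] by blast
  obtain C1 where C1: "\<And>y. norm y ^ (2 * DIM('a)) * norm (g y) \<le> C1"
    using rapidly_decreasingD[OF assms] by blast
  have "norm (g y) \<le> 2 ^ DIM('a) * (C0 + C1) * cauchy_weight y" for y
  proof -
    have "norm (g y) * inverse (cauchy_weight y)
        \<le> norm (g y) * (2 ^ DIM('a) * (1 + norm y ^ (2 * DIM('a))))"
      by (intro mult_left_mono inverse_cauchy_weight_le norm_ge_zero)
    also have "\<dots> = 2 ^ DIM('a) * (norm (g y) + norm y ^ (2 * DIM('a)) * norm (g y))"
      by (simp add: algebra_simps)
    also have "\<dots> \<le> 2 ^ DIM('a) * (C0 + C1)"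
      using C0[of y] C1[of y] by (intro mult_left_mono add_mono) auto
    finally show ?thesis
      using cauchy_weight_pos[of y] by (simp add: divide_inverse[symmetric] pos_divide_le_eq)
  qed
  then show ?thesis by (rule that)
qed

lemma integrable_rapidly_decreasing:
  fixes g :: "'a::euclidean_space \<Rightarrow> 'b::{banach, second_countable_topology}"
  assumes g: "rapidly_decreasing g"
  shows "integrable lborel g"
proof -
  obtain K where K: "\<And>y. norm (g y) \<le> K * cauchy_weight y"
    using rapidly_decreasing_le_cauchy_weight[OF g] by blast
  show ?thesis
  proof (rule Bochner_Integration.integrable_bound)
    show "integrable lborel (\<lambda>y. K * cauchy_weight y)"
      by (intro integrable_mult_right integrable_cauchy_weight)
    show "AE y in lborel. norm (g y) \<le> norm (K * cauchy_weight y)"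
    proof (intro AE_I2)
      fix y
      show "norm (g y) \<le> norm (K * cauchy_weight y)"
        using K[of y] abs_ge_self[of "K * cauchy_weight y"] by simp
    qed
  qed (use g in measurable)
qed

lemma integrable_norm_power_mult_rapidly_decreasing:
  fixes g :: "'a::euclidean_space \<Rightarrow> 'b::{banach, second_countable_topology}"
  assumes "rapidly_decreasing g"
  shows "integrable lborel (\<lambda>y. norm y ^ k * norm (g y))"
  using integrable_rapidly_decreasing[OF rapidly_decreasing_scaleR_norm_power[OF assms], THEN integrable_norm]
  by simp

lemma norm_power_le_split:
  fixes y z :: "'a::real_normed_vector"
  shows "norm y ^ k \<le> 2 ^ k * (norm z ^ k + norm (y - z) ^ k)"
proof -
  let ?a = "norm z" and ?b = "norm (y - z)"
  have "norm y \<le> 2 * max ?a ?b"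
    using norm_triangle_ineq[of z "y - z"] by simp
  then have "norm y ^ k \<le> (2 * max ?a ?b) ^ k"
    by (intro power_mono) auto
  also have "\<dots> = 2 ^ k * max ?a ?b ^ k"
    by (simp add: power_mult_distrib)
  also have "max ?a ?b ^ k \<le> ?a ^ k + ?b ^ k"
    by (cases "?a \<le> ?b") (auto simp: max_def)
  finally show ?thesis by simp
qed

lemma norm_power_mult_le_split:
  fixes y z :: "'a::real_normed_vector"
  assumes "0 \<le> a" "a \<le> A" "0 \<le> b" "b \<le> B"
  shows "norm y ^ k * (a * b) \<le> 2 ^ k * (B * (norm z ^ k * a) + A * (norm (y - z) ^ k * b))"
proof -
  have "norm y ^ k * (a * b) \<le> 2 ^ k * ((norm z ^ k * a) * b + (norm (y - z) ^ k * b) * a)"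
    using mult_right_mono[OF norm_power_le_split[of y k z], of "a * b"] assms
    by (simp add: algebra_simps)
  also have "\<dots> \<le> 2 ^ k * ((norm z ^ k * a) * B + (norm (y - z) ^ k * b) * A)"
    using assms by (intro mult_left_mono add_mono) auto
  finally show ?thesis
    by (simp add: algebra_simps)
qed

lemma norm_power_mult_conv_le:
  fixes g h :: "'a::euclidean_space \<Rightarrow> complex"
  assumes g: "integrable lborel g" "\<And>z. norm (g z) \<le> Bg"
    and h: "integrable lborel h" "\<And>z. norm (h z) \<le> Bh"
    and mg: "integrable lborel (\<lambda>z. norm z ^ k * norm (g z))"
    and mh: "integrable lborel (\<lambda>z. norm z ^ k * norm (h z))"
  shows "norm y ^ k * norm (conv g h y)
    \<le> 2 ^ k * (Bh * (\<integral>z. norm z ^ k * norm (g z) \<partial>lborel) + Bg * (\<integral>z. norm z ^ k * norm (h z) \<partial>lborel))"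
proof -
  note [measurable] = borel_measurable_integrable[OF g(1)] borel_measurable_integrable[OF h(1)]
  have mh': "integrable lborel (\<lambda>z. norm (y - z) ^ k * norm (h (y - z)))"
    using integrable_lborel_reflect[OF mh] .
  have pointwise: "norm y ^ k * (norm (g z) * norm (h (y - z)))
      \<le> 2 ^ k * (Bh * (norm z ^ k * norm (g z)) + Bg * (norm (y - z) ^ k * norm (h (y - z))))" for z
    using g(2)[of z] h(2)[of "y - z"] by (intro norm_power_mult_le_split) auto
  have "norm y ^ k * norm (conv g h y) \<le> norm y ^ k * (\<integral>z. norm (g z) * norm (h (y - z)) \<partial>lborel)"
    unfolding conv_def using integral_norm_bound[of lborel "\<lambda>z. g z * h (y - z)"]
    by (intro mult_left_mono) (auto simp: norm_mult)
  also have "\<dots> \<le> (\<integral>z. 2 ^ k * (Bh * (norm z ^ k * norm (g z))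
      + Bg * (norm (y - z) ^ k * norm (h (y - z)))) \<partial>lborel)"
  proof -
    have "integrable lborel (\<lambda>z. norm (g z) * norm (h (y - z)))"
    proof (rule Bochner_Integration.integrable_bound)
      show "integrable lborel (\<lambda>z. Bh * norm (g z))"
        using g(1) by (intro integrable_mult_right integrable_norm)
      show "AE z in lborel. norm (norm (g z) * norm (h (y - z))) \<le> norm (Bh * norm (g z))"
      proof (intro AE_I2)
        fix z
        have "norm (h (y - z)) \<le> \<bar>Bh\<bar>"
          using h(2)[of "y - z"] by linarith
        from mult_left_mono[OF this norm_ge_zero[of "g z"]]
        show "norm (norm (g z) * norm (h (y - z))) \<le> norm (Bh * norm (g z))"
          by (simp add: abs_mult mult.commute)
      qed
    qed measurable
    then show ?thesis
      unfolding integral_mult_right_zero[symmetric]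
      using mg mh' pointwise by (intro integral_mono) auto
  qed
  also have "\<dots> = 2 ^ k * (Bh * (\<integral>z. norm z ^ k * norm (g z) \<partial>lborel)
                         + Bg * (\<integral>z. norm (y - z) ^ k * norm (h (y - z)) \<partial>lborel))"
    using mg mh' by simp
  finally show ?thesis
    by (simp only: integral_lborel_reflect[of "\<lambda>z. norm z ^ k * norm (h z)"])
qed

lemma rapidly_decreasing_conv:
  fixes g h :: "'a::euclidean_space \<Rightarrow> complex"
  assumes g: "rapidly_decreasing g" and h: "rapidly_decreasing h"
  shows "rapidly_decreasing (conv g h)"
  unfolding rapidly_decreasing_def
proof (intro conjI allI)
  show "conv g h \<in> borel_measurable borel"
    using g h by (intro borel_measurable_conv rapidly_decreasing_measurable)
  fix k
  obtain Bg where Bg: "\<And>z. norm (g z) \<le> Bg"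
    using rapidly_decreasing_bounded[OF g] by blast
  obtain Bh where Bh: "\<And>z. norm (h z) \<le> Bh"
    using rapidly_decreasing_bounded[OF h] by blast
  have "norm y ^ k * norm (conv g h y)
      \<le> 2 ^ k * (Bh * (\<integral>z. norm z ^ k * norm (g z) \<partial>lborel) + Bg * (\<integral>z. norm z ^ k * norm (h z) \<partial>lborel))"
    for y
    using integrable_rapidly_decreasing[OF g] Bg integrable_rapidly_decreasing[OF h] Bh
      integrable_norm_power_mult_rapidly_decreasing[OF g]
      integrable_norm_power_mult_rapidly_decreasing[OF h]
    by (rule norm_power_mult_conv_le)
  then show "\<exists>C. \<forall>y. norm y ^ k * norm (conv g h y) \<le> C"
    by blast
qed

section \<open>Fourier inversion\<close>

definition ifourier :: "('a::euclidean_space \<Rightarrow> complex) \<Rightarrow> 'a \<Rightarrow> complex" where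
  "ifourier g k = (\<integral>x. g x * e2pi (- (k \<bullet> x)) \<partial>lborel)"

lemma cnj_fourier_of_real:
  "cnj (fourier (\<lambda>x. complex_of_real (f x)) k) = ifourier (\<lambda>x. complex_of_real (f x)) k"
proof -
  have "cnj (fourier (\<lambda>x. complex_of_real (f x)) k)
      = (\<integral>x. cnj (complex_of_real (f x) * e2pi (k \<bullet> x)) \<partial>lborel)"
    unfolding fourier_e2pi by (rule Bochner_Integration.integral_cnj[symmetric])
  then show ?thesis
    unfolding ifourier_def by (simp add: cnj_e2pi)
qed

lemma borel_measurable_ifourier [measurable]:
  assumes [measurable]: "g \<in> borel_measurable borel"
  shows "ifourier g \<in> borel_measurable borel"
  unfolding ifourier_def[abs_def] by measurable

lemma norm_ifourier_le: "norm (ifourier g k) \<le> (\<integral>x. norm (g x) \<partial>lborel)"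
  using integral_norm_bound[of lborel "\<lambda>x. g x * e2pi (- (k \<bullet> x))"]
  unfolding ifourier_def by (simp add: norm_mult)

lemma ifourier_translate:
  "ifourier (\<lambda>x. g (x + c)) k = e2pi (k \<bullet> c) * ifourier g k"
proof -
  have "ifourier (\<lambda>x. g (x + c)) k = (\<integral>x. g (x - c + c) * e2pi (- (k \<bullet> (x - c))) \<partial>lborel)"
    unfolding ifourier_def
    using integral_lborel_translate[of "\<lambda>x. g (x + c) * e2pi (- (k \<bullet> x))" "- c"] by simp
  also have "\<dots> = (\<integral>x. e2pi (k \<bullet> c) * (g x * e2pi (- (k \<bullet> x))) \<partial>lborel)"
    by (intro Bochner_Integration.integral_cong refl)
       (simp add: inner_diff_right e2pi_add[symmetric] algebra_simps)
  finally show ?thesis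
    unfolding ifourier_def by simp
qed

lemma integrable_mult_e2pi:
  fixes g :: "'a::euclidean_space \<Rightarrow> complex"
  assumes "integrable lborel g"
  shows "integrable lborel (\<lambda>x. g x * e2pi (- (k \<bullet> x)))"
  using assms borel_measurable_integrable[OF assms]
  by (intro Bochner_Integration.integrable_bound[OF integrable_norm[OF assms]]) (auto simp: norm_mult)

lemma ifourier_diff:
  assumes "integrable lborel g" "integrable lborel h"
  shows "ifourier (\<lambda>x. g x - h x) k = ifourier g k - ifourier h k"
  unfolding ifourier_def using integrable_mult_e2pi[OF assms(1)] integrable_mult_e2pi[OF assms(2)]
  by (simp add: left_diff_distrib)

lemma fourier_ifourier_mult:
  fixes f g :: "'a::euclidean_space \<Rightarrow> complex"
  assumes f: "integrable lborel f" and g: "integrable lborel g"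
  shows "fourier (\<lambda>k. ifourier f k * g k) y = (\<integral>u. f u * fourier g (y - u) \<partial>lborel)"
proof -
  note [measurable] = borel_measurable_integrable[OF f] borel_measurable_integrable[OF g]
  let ?F = "\<lambda>k u. f u * e2pi (- (k \<bullet> u)) * g k * e2pi (y \<bullet> k)"
  have "fourier (\<lambda>k. ifourier f k * g k) y = (\<integral>k. (\<integral>u. ?F k u \<partial>lborel) \<partial>lborel)"
    unfolding fourier_e2pi ifourier_def by (simp add: mult.commute)
  also have "\<dots> = (\<integral>u. (\<integral>k. ?F k u \<partial>lborel) \<partial>lborel)"
  proof (rule Fubini_integral_swap)
    have "(\<integral>u. norm (?F k u) \<partial>lborel) = norm (g k) * (\<integral>u. norm (f u) \<partial>lborel)" for k
      by (simp add: norm_mult mult.commute)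
    then show "integrable lborel (\<lambda>k. \<integral>u. norm (?F k u) \<partial>lborel)"
      using g by simp
    have "integrable lborel (?F k)" for k
    proof (rule Bochner_Integration.integrable_bound)
      show "integrable lborel (\<lambda>u. norm (g k) * norm (f u))"
        using f by simp
    qed (auto simp: norm_mult)
    then show "AE k in lborel. integrable lborel (?F k)"
      by simp
  qed (simp_all add: lborel.sigma_finite_measure_axioms)
  also have "\<dots> = (\<integral>u. f u * fourier g (y - u) \<partial>lborel)"
  proof (intro Bochner_Integration.integral_cong refl)
    fix u
    have "(\<integral>k. ?F k u \<partial>lborel) = (\<integral>k. f u * (g k * e2pi ((y - u) \<bullet> k)) \<partial>lborel)"
      by (intro Bochner_Integration.integral_cong refl)
         (simp add: inner_diff_left inner_commute e2pi_add[symmetric] algebra_simps)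
    then show "(\<integral>k. ?F k u \<partial>lborel) = f u * fourier g (y - u)"
      unfolding fourier_e2pi by simp
  qed
  finally show ?thesis .
qed

lemma fourier_ifourier_gaussian:
  fixes f :: "'a::euclidean_space \<Rightarrow> complex"
  assumes f: "integrable lborel f" and r: "r > 0"
  shows "fourier (\<lambda>k. ifourier f k * complex_of_real (gaussian (r *\<^sub>R k))) y
       = (\<integral>v. complex_of_real (gaussian v) * f (y + r *\<^sub>R v) \<partial>lborel)"
proof -
  have "integrable lborel (\<lambda>k::'a. gaussian (0 + r *\<^sub>R k))"
    using r by (intro integrable_lborel_affine integrable_gaussian) simp
  then have "integrable lborel (\<lambda>k::'a. complex_of_real (gaussian (r *\<^sub>R k)))"
    by simp
  then have "fourier (\<lambda>k. ifourier f k * complex_of_real (gaussian (r *\<^sub>R k))) y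
      = (\<integral>u. f u * complex_of_real ((1/r) ^ DIM('a) * gaussian ((1/r) *\<^sub>R (y - u))) \<partial>lborel)"
    by (simp only: fourier_ifourier_mult[OF f] fourier_gaussian_scaled[OF r])
  also have "\<dots> = \<bar>r\<bar> ^ DIM('a) *\<^sub>R (\<integral>v. f (y + r *\<^sub>R v)
      * complex_of_real ((1/r) ^ DIM('a) * gaussian ((1/r) *\<^sub>R (y - (y + r *\<^sub>R v)))) \<partial>lborel)"
    using r by (intro integral_lborel_affine) simp
  also have "\<dots> = (\<integral>v. complex_of_real (gaussian v) * f (y + r *\<^sub>R v) \<partial>lborel)"
    using r by (simp add: scaleR_conv_of_real power_divide mult_ac)
  finally show ?thesis .
qed

lemma tendsto_fourier_gaussian_damped:
  fixes g :: "'a::euclidean_space \<Rightarrow> complex"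
  assumes g: "integrable lborel g" and r: "r \<longlonglongrightarrow> 0"
  shows "(\<lambda>j. fourier (\<lambda>k. g k * complex_of_real (gaussian (r j *\<^sub>R k))) y) \<longlonglongrightarrow> fourier g y"
  unfolding fourier_e2pi
proof (rule integral_dominated_convergence[where w="\<lambda>k. norm (g k)"])
  note [measurable] = borel_measurable_integrable[OF g]
  show "(\<lambda>k. g k * e2pi (y \<bullet> k)) \<in> borel_measurable lborel"
    by measurable
  show "(\<lambda>k. g k * complex_of_real (gaussian (r j *\<^sub>R k)) * e2pi (y \<bullet> k)) \<in> borel_measurable lborel" for j
    by measurable
  show "integrable lborel (\<lambda>k. norm (g k))"
    using g by simp
  show "AE k in lborel. (\<lambda>j. g k * complex_of_real (gaussian (r j *\<^sub>R k)) * e2pi (y \<bullet> k))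
      \<longlonglongrightarrow> g k * e2pi (y \<bullet> k)"
  proof (intro AE_I2)
    fix k :: 'a
    have "(\<lambda>j. gaussian (r j *\<^sub>R k)) \<longlonglongrightarrow> gaussian (0 *\<^sub>R k)"
      by (intro isCont_tendsto_compose[OF isCont_gaussian] tendsto_intros r)
    then have "(\<lambda>j. complex_of_real (gaussian (r j *\<^sub>R k))) \<longlonglongrightarrow> 1"
      by (auto simp: gaussian_def dest: tendsto_of_real)
    from tendsto_mult[OF tendsto_mult[OF tendsto_const this] tendsto_const]
    show "(\<lambda>j. g k * complex_of_real (gaussian (r j *\<^sub>R k)) * e2pi (y \<bullet> k))
        \<longlonglongrightarrow> g k * e2pi (y \<bullet> k)"
      by simp
  qed
  show "AE k in lborel. norm (g k * complex_of_real (gaussian (r j *\<^sub>R k)) * e2pi (y \<bullet> k)) \<le> norm (g k)" for j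
  proof (intro AE_I2)
    fix k :: 'a
    show "norm (g k * complex_of_real (gaussian (r j *\<^sub>R k)) * e2pi (y \<bullet> k)) \<le> norm (g k)"
      using gaussian_le_1[of "r j *\<^sub>R k"] gaussian_pos[of "r j *\<^sub>R k"]
      by (simp add: norm_mult mult_left_le)
  qed
qed

lemma tendsto_integral_gaussian_average:
  fixes f :: "'a::euclidean_space \<Rightarrow> complex"
  assumes [measurable]: "f \<in> borel_measurable borel"
    and f: "isCont f y" "\<And>x. norm (f x) \<le> B" and r: "r \<longlonglongrightarrow> 0"
  shows "(\<lambda>j. \<integral>v. complex_of_real (gaussian v) * f (y + r j *\<^sub>R v) \<partial>lborel) \<longlonglongrightarrow> f y"
proof -
  have "(\<lambda>j. \<integral>v. complex_of_real (gaussian v) * f (y + r j *\<^sub>R v) \<partial>lborel)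
      \<longlonglongrightarrow> (\<integral>v. complex_of_real (gaussian (v::'a)) * f y \<partial>lborel)"
  proof (rule integral_dominated_convergence[where w="\<lambda>v. B * gaussian v"])
    show "integrable lborel (\<lambda>v. B * gaussian v)"
      by (intro integrable_mult_right integrable_gaussian)
    show "AE v in lborel. (\<lambda>j. complex_of_real (gaussian v) * f (y + r j *\<^sub>R v))
        \<longlonglongrightarrow> complex_of_real (gaussian v) * f y"
    proof (intro AE_I2)
      fix v :: 'a
      have "(\<lambda>j. y + r j *\<^sub>R v) \<longlonglongrightarrow> y + 0 *\<^sub>R v"
        by (intro tendsto_intros r)
      then have "(\<lambda>j. f (y + r j *\<^sub>R v)) \<longlonglongrightarrow> f y"
        using isCont_tendsto_compose[OF f(1)] by simp
      then show "(\<lambda>j. complex_of_real (gaussian v) * f (y + r j *\<^sub>R v))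
          \<longlonglongrightarrow> complex_of_real (gaussian v) * f y"
        by (intro tendsto_mult_left) simp
    qed
    show "AE v in lborel. norm (complex_of_real (gaussian v) * f (y + r j *\<^sub>R v)) \<le> B * gaussian v" for j
    proof (intro AE_I2)
      fix v :: 'a
      show "norm (complex_of_real (gaussian v) * f (y + r j *\<^sub>R v)) \<le> B * gaussian v"
        using mult_right_mono[OF f(2) less_imp_le[OF gaussian_pos]]
        by (simp add: norm_mult abs_of_pos[OF gaussian_pos] mult.commute)
    qed
    show "(\<lambda>v. complex_of_real (gaussian (v::'a)) * f y) \<in> borel_measurable lborel"
      by measurable
    show "(\<lambda>v. complex_of_real (gaussian v) * f (y + r j *\<^sub>R v)) \<in> borel_measurable lborel" for j
      by measurable
  qed
  also have "(\<integral>v. complex_of_real (gaussian (v::'a)) * f y \<partial>lborel) = f y"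
    using integral_gaussian[where 'a='a] by simp
  finally show ?thesis .
qed

lemma fourier_ifourier:
  fixes f :: "'a::euclidean_space \<Rightarrow> complex"
  assumes f: "integrable lborel f" "\<And>x. isCont f x" "\<And>x. norm (f x) \<le> B"
    and if_int: "integrable lborel (ifourier f)"
  shows "fourier (ifourier f) y = f y"
proof -
  define r where "r j = 1 / real (Suc j)" for j
  have r: "r \<longlonglongrightarrow> 0" "\<And>j. r j > 0"
    unfolding r_def by (simp_all add: lim_1_over_n LIMSEQ_Suc[OF lim_1_over_n] del: of_nat_Suc)
  have "(\<lambda>j. fourier (\<lambda>k. ifourier f k * complex_of_real (gaussian (r j *\<^sub>R k))) y) \<longlonglongrightarrow> fourier (ifourier f) y"
    by (rule tendsto_fourier_gaussian_damped[OF if_int r(1)])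
  moreover have "(\<lambda>j. fourier (\<lambda>k. ifourier f k * complex_of_real (gaussian (r j *\<^sub>R k))) y) \<longlonglongrightarrow> f y"
    unfolding fourier_ifourier_gaussian[OF f(1) r(2)]
    using borel_measurable_integrable[OF f(1)] f(2,3) r(1)
    by (intro tendsto_integral_gaussian_average) simp_all
  ultimately show ?thesis
    by (rule LIMSEQ_unique)
qed

section \<open>Decay of the inverse transform of a smooth function\<close>

lemma has_real_derivative_along_line:
  fixes h :: "'a::euclidean_space \<Rightarrow> real"
  assumes "h differentiable (at (x + s *\<^sub>R b))"
  shows "((\<lambda>s. h (x + s *\<^sub>R b)) has_real_derivative frechet_derivative h (at (x + s *\<^sub>R b)) b) (at s)"
proof -
  let ?D = "frechet_derivative h (at (x + s *\<^sub>R b))"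
  have D: "(h has_derivative ?D) (at (x + s *\<^sub>R b))"
    using assms frechet_derivative_works by blast
  have "((h \<circ> (\<lambda>s. x + s *\<^sub>R b)) has_derivative (?D \<circ> (\<lambda>u. u *\<^sub>R b))) (at s)"
    by (rule diff_chain_at) (auto intro!: derivative_eq_intros D)
  moreover have "?D \<circ> (\<lambda>u. u *\<^sub>R b) = (*) (?D b)"
    using linear.scaleR[OF has_derivative_linear[OF D]] by (auto simp: fun_eq_iff mult.commute)
  ultimately show ?thesis
    unfolding has_field_derivative_def comp_def by simp
qed

lemma integral_directional_derivative_segment:
  fixes h G :: "'a::euclidean_space \<Rightarrow> real"
  assumes deriv: "\<And>s. ((\<lambda>s. h (x + s *\<^sub>R b)) has_real_derivative G (x + s *\<^sub>R b)) (at s)"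
    and G_cont: "\<And>x. isCont G x" and t: "0 \<le> t"
  shows "(\<integral>s. indicator {0..t} s * G (x + s *\<^sub>R b) \<partial>lborel) = h (x + t *\<^sub>R b) - h x"
proof -
  have "(\<integral>s. indicator {0..t} s *\<^sub>R G (x + s *\<^sub>R b) \<partial>lborel) = h (x + t *\<^sub>R b) - h (x + 0 *\<^sub>R b)"
  proof (rule integral_FTC_atLeastAtMost[OF t])
    show "((\<lambda>s. h (x + s *\<^sub>R b)) has_vector_derivative G (x + s *\<^sub>R b)) (at s within {0..t})" for s
      using deriv[of s]
      by (simp add: has_real_derivative_iff_has_vector_derivative has_vector_derivative_at_within)
    have "isCont (\<lambda>s. G (x + s *\<^sub>R b)) s" for s
      by (rule isCont_o2[OF _ G_cont]) (intro continuous_intros)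
    then show "continuous_on {0..t} (\<lambda>s. G (x + s *\<^sub>R b))"
      by (intro continuous_at_imp_continuous_on) auto
  qed
  then show ?thesis
    by simp
qed

lemma ifourier_integral_segment:
  fixes G :: "'a::euclidean_space \<Rightarrow> real"
  assumes G: "integrable lborel G" and t: "0 \<le> t"
  shows "ifourier (\<lambda>x. complex_of_real (\<integral>s. indicator {0..t} s * G (x + s *\<^sub>R b) \<partial>lborel)) k
       = (\<integral>s. indicator {0..t} s * e2pi (s * (k \<bullet> b)) \<partial>lborel) * ifourier (\<lambda>x. complex_of_real (G x)) k"
proof -
  note [measurable] = borel_measurable_integrable[OF G]
  let ?F = "\<lambda>x s. complex_of_real (indicator {0..t} s * G (x + s *\<^sub>R b)) * e2pi (- (k \<bullet> x))"
  have "ifourier (\<lambda>x. complex_of_real (\<integral>s. indicator {0..t} s * G (x + s *\<^sub>R b) \<partial>lborel)) k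
      = (\<integral>x. (\<integral>s. ?F x s \<partial>lborel) \<partial>lborel)"
    unfolding ifourier_def by (simp only: integral_mult_left_zero integral_complex_of_real)
  also have "\<dots> = (\<integral>s. (\<integral>x. ?F x s \<partial>lborel) \<partial>lborel)"
  proof (rule Fubini_integral_swap[where F="\<lambda>s x. ?F x s", symmetric])
    have "(\<integral>x. norm (?F x s) \<partial>lborel) = indicator {0..t} s * (\<integral>x. norm (G x) \<partial>lborel)" for s
      using integral_lborel_translate[of "\<lambda>x. norm (G x)" "s *\<^sub>R b"]
      by (simp add: norm_mult abs_mult)
    moreover have "integrable lborel (\<lambda>s::real. indicator {0..t} s * (\<integral>x. norm (G x) \<partial>lborel))"
      using t by (intro integrable_mult_left integrable_real_indicator) auto
    ultimately show "integrable lborel (\<lambda>s. \<integral>x. norm (?F x s) \<partial>lborel)"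
      by simp
    have "integrable lborel (\<lambda>x. ?F x s)" for s
      using integrable_norm[OF integrable_lborel_translate[OF G]]
      by (rule Bochner_Integration.integrable_bound) (auto simp: norm_mult abs_mult indicator_def)
    then show "AE s in lborel. integrable lborel (\<lambda>x. ?F x s)"
      by simp
  qed (simp_all add: lborel.sigma_finite_measure_axioms)
  also have "\<dots> = (\<integral>s. indicator {0..t} s * e2pi (s * (k \<bullet> b)) * ifourier (\<lambda>x. complex_of_real (G x)) k \<partial>lborel)"
  proof (intro Bochner_Integration.integral_cong refl)
    fix s :: real
    have "(\<integral>x. ?F x s \<partial>lborel)
        = indicator {0..t} s * ifourier (\<lambda>x. complex_of_real (G (x + s *\<^sub>R b))) k"
      unfolding ifourier_def by (simp add: mult.assoc split: split_indicator)
    then show "(\<integral>x. ?F x s \<partial>lborel)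
        = indicator {0..t} s * e2pi (s * (k \<bullet> b)) * ifourier (\<lambda>x. complex_of_real (G x)) k"
      using ifourier_translate[of "\<lambda>x. complex_of_real (G x)" "s *\<^sub>R b" k] by (simp add: mult.assoc)
  qed
  finally show ?thesis
    by simp
qed

text \<open>Comparing \<open>h\<close> with its translate by \<open>t b\<close> replaces an integration by parts:
  the difference is the integral of the directional derivative \<open>G\<close> over a segment.\<close>
lemma ifourier_translate_diff:
  fixes h G :: "'a::euclidean_space \<Rightarrow> real"
  assumes deriv: "\<And>x s. ((\<lambda>s. h (x + s *\<^sub>R b)) has_real_derivative G (x + s *\<^sub>R b)) (at s)"
    and G_cont: "\<And>x. isCont G x"
    and h: "integrable lborel h" and G: "integrable lborel G" and t: "0 \<le> t"
  shows "(e2pi (t * (k \<bullet> b)) - 1) * ifourier (\<lambda>x. complex_of_real (h x)) k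
       = (\<integral>s. indicator {0..t} s * e2pi (s * (k \<bullet> b)) \<partial>lborel) * ifourier (\<lambda>x. complex_of_real (G x)) k"
proof -
  have "(e2pi (t * (k \<bullet> b)) - 1) * ifourier (\<lambda>x. complex_of_real (h x)) k
      = ifourier (\<lambda>x. complex_of_real (h (x + t *\<^sub>R b))) k - ifourier (\<lambda>x. complex_of_real (h x)) k"
    using ifourier_translate[of "\<lambda>x. complex_of_real (h x)" "t *\<^sub>R b" k] by (simp add: algebra_simps)
  also have "\<dots> = ifourier (\<lambda>x. complex_of_real (h (x + t *\<^sub>R b)) - complex_of_real (h x)) k"
    using integrable_lborel_translate[OF h, of "t *\<^sub>R b"] h by (simp add: ifourier_diff)
  also have "\<dots> = ifourier (\<lambda>x. complex_of_real (\<integral>s. indicator {0..t} s * G (x + s *\<^sub>R b) \<partial>lborel)) k"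
    by (simp add: integral_directional_derivative_segment[OF deriv G_cont t])
  also have "\<dots> = (\<integral>s. indicator {0..t} s * e2pi (s * (k \<bullet> b)) \<partial>lborel) * ifourier (\<lambda>x. complex_of_real (G x)) k"
    by (rule ifourier_integral_segment[OF G t])
  finally show ?thesis .
qed

lemma norm_integral_segment_e2pi_le:
  assumes "0 \<le> t"
  shows "norm (\<integral>s. indicator {0..t} s * e2pi (s * a) \<partial>lborel) \<le> t"
proof -
  have "norm (indicator {0..t} s :: complex) = indicator {0..t} s" for s
    by (simp split: split_indicator)
  then have "(\<integral>s. norm (indicator {0..t} s * e2pi (s * a)) \<partial>lborel) = t"
    using assms by (simp add: norm_mult)
  then show ?thesis
    using integral_norm_bound[of lborel "\<lambda>s. indicator {0..t} s * e2pi (s * a)"] by simp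
qed

lemma norm_ifourier_le_directional_derivative:
  fixes h G :: "'a::euclidean_space \<Rightarrow> real"
  assumes deriv: "\<And>x s. ((\<lambda>s. h (x + s *\<^sub>R b)) has_real_derivative G (x + s *\<^sub>R b)) (at s)"
    and G_cont: "\<And>x. isCont G x"
    and h: "integrable lborel h" and G: "integrable lborel G"
  shows "\<bar>k \<bullet> b\<bar> * norm (ifourier (\<lambda>x. complex_of_real (h x)) k)
    \<le> norm (ifourier (\<lambda>x. complex_of_real (G x)) k) / 4"
proof (cases "k \<bullet> b = 0")
  case False
  define a where "a = k \<bullet> b"
  define t where "t = 1 / (2 * \<bar>a\<bar>)"
  have t: "t > 0" "\<bar>a\<bar> * t = 1/2"
    using False unfolding a_def t_def by auto
  have "t * a = 1/2 \<or> t * a = - (1/2)"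
    using False unfolding a_def t_def by (auto simp: abs_if)
  then have half_turn: "e2pi (t * a) = -1"
    using e2pi_half by metis
  have "2 * norm (ifourier (\<lambda>x. complex_of_real (h x)) k)
      = norm ((e2pi (t * a) - 1) * ifourier (\<lambda>x. complex_of_real (h x)) k)"
    by (simp add: half_turn norm_mult)
  also have "\<dots> = norm (\<integral>s. indicator {0..t} s * e2pi (s * a) \<partial>lborel)
      * norm (ifourier (\<lambda>x. complex_of_real (G x)) k)"
    unfolding a_def ifourier_translate_diff[OF deriv G_cont h G less_imp_le[OF t(1)]] norm_mult ..
  finally have "norm (ifourier (\<lambda>x. complex_of_real (h x)) k)
      \<le> t * norm (ifourier (\<lambda>x. complex_of_real (G x)) k) / 2"
    using mult_right_mono[OF norm_integral_segment_e2pi_le[OF less_imp_le[OF t(1)], of a]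
        norm_ge_zero[of "ifourier (\<lambda>x. complex_of_real (G x)) k"]]
    by simp
  then have "\<bar>a\<bar> * norm (ifourier (\<lambda>x. complex_of_real (h x)) k)
      \<le> \<bar>a\<bar> * (t * norm (ifourier (\<lambda>x. complex_of_real (G x)) k) / 2)"
    by (rule mult_left_mono) simp
  also have "\<dots> = (\<bar>a\<bar> * t) * norm (ifourier (\<lambda>x. complex_of_real (G x)) k) / 2"
    by (simp only: mult.assoc times_divide_eq_right)
  finally show ?thesis
    unfolding t(2) unfolding a_def by simp
qed simp

lemma smooth_bdd_intD:
  assumes "smooth_bdd_int f" "vs \<in> lists Basis"
  shows "\<And>x. iter_pd vs f differentiable (at x)" "bounded (range (iter_pd vs f))"
    "integrable lborel (iter_pd vs f)"
  using assms unfolding smooth_bdd_int_def by auto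

lemma ifourier_iter_pd_decay:
  assumes f: "smooth_bdd_int f" and b: "b \<in> Basis" and vs: "vs \<in> lists Basis"
  shows "\<exists>C. \<forall>k. \<bar>k \<bullet> b\<bar> ^ m * norm (ifourier (\<lambda>x. complex_of_real (iter_pd vs f x)) k) \<le> C"
  using vs
proof (induction m arbitrary: vs)
  case 0
  then show ?case
    using norm_ifourier_le by auto
next
  case (Suc m)
  let ?h = "iter_pd vs f" and ?G = "iter_pd (b # vs) f"
  have bvs: "b # vs \<in> lists Basis"
    using Suc.prems b by simp
  obtain C where C: "\<And>k. \<bar>k \<bullet> b\<bar> ^ m * norm (ifourier (\<lambda>x. complex_of_real (?G x)) k) \<le> C"
    using Suc.IH[OF bvs] by blast
  have deriv: "((\<lambda>s. ?h (x + s *\<^sub>R b)) has_real_derivative ?G (x + s *\<^sub>R b)) (at s)" for x s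
    using has_real_derivative_along_line[OF smooth_bdd_intD(1)[OF f Suc.prems]] by simp
  have G_cont: "isCont ?G x" for x
    using smooth_bdd_intD(1)[OF f bvs] by (simp add: differentiable_imp_continuous_within)
  note decay = norm_ifourier_le_directional_derivative[OF deriv G_cont
      smooth_bdd_intD(3)[OF f Suc.prems] smooth_bdd_intD(3)[OF f bvs]]
  have "\<bar>k \<bullet> b\<bar> ^ Suc m * norm (ifourier (\<lambda>x. complex_of_real (?h x)) k) \<le> C / 4" for k
  proof -
    have "\<bar>k \<bullet> b\<bar> ^ Suc m * norm (ifourier (\<lambda>x. complex_of_real (?h x)) k)
        = \<bar>k \<bullet> b\<bar> ^ m * (\<bar>k \<bullet> b\<bar> * norm (ifourier (\<lambda>x. complex_of_real (?h x)) k))"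
      by (simp add: mult_ac)
    also have "\<dots> \<le> \<bar>k \<bullet> b\<bar> ^ m * (norm (ifourier (\<lambda>x. complex_of_real (?G x)) k) / 4)"
      by (intro mult_left_mono decay) simp
    also have "\<dots> \<le> C / 4"
      using C[of k] by simp
    finally show ?thesis .
  qed
  then show ?case
    by blast
qed

lemma norm_power_le_sum_Basis:
  "norm (k::'a::euclidean_space) ^ m \<le> real DIM('a) ^ m * (\<Sum>b\<in>Basis. \<bar>k \<bullet> b\<bar> ^ m)"
proof -
  have "Max ((\<lambda>b. \<bar>k \<bullet> b\<bar>) ` Basis) \<in> (\<lambda>b. \<bar>k \<bullet> b\<bar>) ` Basis"
    by (intro Max_in) auto
  then obtain b0 where b0: "Max ((\<lambda>b. \<bar>k \<bullet> b\<bar>) ` Basis) = \<bar>k \<bullet> b0\<bar>" "b0 \<in> Basis"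
    by (rule imageE)
  have b0_max: "\<bar>k \<bullet> b\<bar> \<le> \<bar>k \<bullet> b0\<bar>" if "b \<in> Basis" for b
    unfolding b0(1)[symmetric] using that by (intro Max_ge) auto
  have "norm k \<le> (\<Sum>b\<in>Basis. \<bar>k \<bullet> b\<bar>)"
    by (rule norm_le_l1)
  also have "\<dots> \<le> (\<Sum>b\<in>(Basis::'a set). \<bar>k \<bullet> b0\<bar>)"
    by (intro sum_mono b0_max)
  finally have "norm k ^ m \<le> (real DIM('a) * \<bar>k \<bullet> b0\<bar>) ^ m"
    by (intro power_mono) auto
  also have "\<dots> = real DIM('a) ^ m * \<bar>k \<bullet> b0\<bar> ^ m"
    by (simp add: power_mult_distrib)
  also have "\<bar>k \<bullet> b0\<bar> ^ m \<le> (\<Sum>b\<in>Basis. \<bar>k \<bullet> b\<bar> ^ m)"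
    by (rule member_le_sum[OF b0(2)]) auto
  finally show ?thesis
    by simp
qed

lemma rapidly_decreasing_ifourier:
  assumes f: "smooth_bdd_int (f :: 'a::euclidean_space \<Rightarrow> real)"
  shows "rapidly_decreasing (ifourier (\<lambda>x. complex_of_real (f x)))"
  unfolding rapidly_decreasing_def
proof (intro conjI allI)
  let ?F = "ifourier (\<lambda>x. complex_of_real (f x))"
  show "?F \<in> borel_measurable borel"
    using borel_measurable_integrable[OF smooth_bdd_intD(3)[OF f, of "[]"]] by simp
  fix m
  have "\<forall>b\<in>Basis. \<exists>C. \<forall>k. \<bar>k \<bullet> b\<bar> ^ m * norm (?F k) \<le> C"
    using ifourier_iter_pd_decay[OF f, of _ "[]" m] by simp
  then obtain C where C: "\<And>b k. b \<in> Basis \<Longrightarrow> \<bar>k \<bullet> b\<bar> ^ m * norm (?F k) \<le> C b"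
    by metis
  have "norm k ^ m * norm (?F k) \<le> real DIM('a) ^ m * (\<Sum>b\<in>Basis. C b)" for k
  proof -
    have "norm k ^ m * norm (?F k) \<le> real DIM('a) ^ m * (\<Sum>b\<in>Basis. \<bar>k \<bullet> b\<bar> ^ m * norm (?F k))"
      using mult_right_mono[OF norm_power_le_sum_Basis norm_ge_zero]
      by (simp add: sum_distrib_right mult.assoc)
    also have "\<dots> \<le> real DIM('a) ^ m * (\<Sum>b\<in>Basis. C b)"
      by (intro mult_left_mono sum_mono C) auto
    finally show ?thesis .
  qed
  then show "\<exists>C. \<forall>k. norm k ^ m * norm (?F k) \<le> C"
    by blast
qed

lemma borel_measurable_charfun [measurable]:
  assumes "prob_space M" and [measurable]: "\<xi> \<in> borel_measurable M"
  shows "charfun M \<xi> \<in> borel_measurable borel"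
proof -
  interpret prob_space M by fact
  show ?thesis
    unfolding charfun_e2pi[abs_def] by measurable
qed

lemma norm_charfun_le_1:
  assumes "prob_space M"
  shows "norm (charfun M \<xi> t) \<le> 1"
proof -
  interpret prob_space M by fact
  have "norm (charfun M \<xi> t) \<le> (\<integral>\<omega>. norm (e2pi (t \<bullet> \<xi> \<omega>)) \<partial>M)"
    unfolding charfun_e2pi by (rule integral_norm_bound)
  then show ?thesis
    by (simp add: prob_space)
qed

lemma fourier_ifourier_mult_charfun:
  fixes f :: "'a::euclidean_space \<Rightarrow> complex"
  assumes f: "integrable lborel f" "\<And>x. isCont f x" "\<And>x. norm (f x) \<le> B"
    and if_int: "integrable lborel (ifourier f)"
    and "prob_space M" and [measurable]: "\<xi> \<in> borel_measurable M"
  shows "fourier (\<lambda>k. ifourier f k * charfun M \<xi> k) x = (\<integral>\<omega>. f (x + \<xi> \<omega>) \<partial>M)"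
proof -
  interpret prob_space M by fact
  note [measurable] = borel_measurable_integrable[OF if_int]
  have "fourier (\<lambda>k. ifourier f k * charfun M \<xi> k) x
      = (\<integral>k. (\<integral>\<omega>. ifourier f k * e2pi ((x + \<xi> \<omega>) \<bullet> k) \<partial>M) \<partial>lborel)"
    unfolding fourier_e2pi charfun_e2pi
  proof (intro Bochner_Integration.integral_cong refl)
    fix k
    have "(\<integral>\<omega>. ifourier f k * e2pi ((x + \<xi> \<omega>) \<bullet> k) \<partial>M)
        = (\<integral>\<omega>. ifourier f k * e2pi (x \<bullet> k) * e2pi (k \<bullet> \<xi> \<omega>) \<partial>M)"
      by (intro Bochner_Integration.integral_cong refl)
         (simp add: inner_commute[of _ k] inner_add_right e2pi_add)
    then show "ifourier f k * (\<integral>\<omega>. e2pi (k \<bullet> \<xi> \<omega>) \<partial>M) * e2pi (x \<bullet> k)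
        = (\<integral>\<omega>. ifourier f k * e2pi ((x + \<xi> \<omega>) \<bullet> k) \<partial>M)"
      by (simp add: mult_ac) metis
  qed
  also have "\<dots> = (\<integral>\<omega>. (\<integral>k. ifourier f k * e2pi ((x + \<xi> \<omega>) \<bullet> k) \<partial>lborel) \<partial>M)"
  proof (rule Fubini_integral_swap)
    show "integrable lborel (\<lambda>k. \<integral>\<omega>. norm (ifourier f k * e2pi ((x + \<xi> \<omega>) \<bullet> k)) \<partial>M)"
      using integrable_norm[OF if_int] by (simp add: norm_mult prob_space)
    show "AE k in lborel. integrable M (\<lambda>\<omega>. ifourier f k * e2pi ((x + \<xi> \<omega>) \<bullet> k))"
      by (intro AE_I2 integrable_const_bound[where B="norm (ifourier f k)" for k])
         (auto simp: norm_mult)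
  qed (simp_all add: lborel.sigma_finite_measure_axioms sigma_finite_measure_axioms)
  also have "\<dots> = (\<integral>\<omega>. f (x + \<xi> \<omega>) \<partial>M)"
    using fourier_ifourier[OF f if_int] by (simp add: fourier_e2pi)
  finally show ?thesis .
qed

lemma
  fixes f :: "'a::euclidean_space \<Rightarrow> real"
  assumes f: "smooth_bdd_int f" and M: "prob_space M" and [measurable]: "\<xi> \<in> borel_measurable M"
  defines "g \<equiv> \<lambda>k. cnj (fourier (\<lambda>x. complex_of_real (f x)) k) * charfun M \<xi> k"
  shows rapidly_decreasing_smooth_factor: "rapidly_decreasing g"
    and fourier_smooth_factor: "fourier g x = complex_of_real (\<integral>\<omega>. f (x + \<xi> \<omega>) \<partial>M)"
proof -
  have g: "g = (\<lambda>k. ifourier (\<lambda>x. complex_of_real (f x)) k * charfun M \<xi> k)"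
    unfolding g_def cnj_fourier_of_real ..
  note rapid = rapidly_decreasing_ifourier[OF f]
  show "rapidly_decreasing g"
    unfolding g using M
    by (intro rapidly_decreasing_mult_bounded rapid norm_charfun_le_1 borel_measurable_charfun) simp_all
  obtain B where B: "\<And>x. \<bar>f x\<bar> \<le> B"
    using smooth_bdd_intD(2)[OF f, of "[]"] by (auto simp: bounded_iff)
  have "isCont f x" for x
    using smooth_bdd_intD(1)[OF f, of "[]"] by (simp add: differentiable_imp_continuous_within)
  then have "fourier g x = (\<integral>\<omega>. complex_of_real (f (x + \<xi> \<omega>)) \<partial>M)"
    unfolding g using smooth_bdd_intD(3)[OF f, of "[]"] B M
    by (intro fourier_ifourier_mult_charfun integrable_rapidly_decreasing[OF rapid]) auto
  then show "fourier g x = complex_of_real (\<integral>\<omega>. f (x + \<xi> \<omega>) \<partial>M)"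
    by simp
qed

lemma bigconv_Suc: "1 \<le> m \<Longrightarrow> bigconv g (Suc m) = conv (g (Suc m)) (bigconv g m)"
  by (cases m) auto

lemma rapidly_decreasing_bigconv:
  assumes "\<And>i. i \<in> {1..m} \<Longrightarrow> rapidly_decreasing (g i)" "1 \<le> m"
  shows "rapidly_decreasing (bigconv g m)"
  using assms(2,1)
  by (induction m rule: nat_induct_at_least) (auto simp: bigconv_Suc intro: rapidly_decreasing_conv)

lemma fourier_bigconv:
  assumes "\<And>i. i \<in> {1..m} \<Longrightarrow> rapidly_decreasing (g i)" "1 \<le> m"
  shows "fourier (bigconv g m) x = (\<Prod>i=1..m. fourier (g i) x)"
  using assms(2,1)
proof (induction m rule: nat_induct_at_least)
  case (Suc m)
  have "rapidly_decreasing (bigconv g m)"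
    using Suc by (intro rapidly_decreasing_bigconv) auto
  then show ?case
    using Suc
    by (simp add: bigconv_Suc fourier_conv integrable_rapidly_decreasing prod.nat_ivl_Suc' mult.commute)
qed simp

theorem lemma6p1:
  fixes n :: nat and f :: "nat \<Rightarrow> 'a::euclidean_space \<Rightarrow> real"
    and M :: "'w measure" and \<xi> :: "'w \<Rightarrow> 'a" and s :: "'a \<Rightarrow> complex"
  assumes "n \<ge> 1"
    and "\<And>i. i \<in> {1..n} \<Longrightarrow> smooth_bdd_int (f i)"
    and "\<And>i. i \<in> {1..n} \<Longrightarrow> \<exists>C. \<forall>x. \<bar>f i x\<bar> \<le> C / (1 + norm x ^ (2 * DIM('a)))"
    and "prob_space M"
    and "\<xi> \<in> borel_measurable M"
    and "s = bigconv (\<lambda>i k. cnj (fourier (\<lambda>x. complex_of_real (f i x)) k) * charfun M \<xi> k) n"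
  shows "integrable lborel s
    \<and> (\<forall>x. fourier s x = (\<Prod>i=1..n. complex_of_real (\<integral>\<omega>. f i (x + \<xi> \<omega>) \<partial>M)))
    \<and> (\<forall>k::nat. bdd_above ((\<lambda>y. norm y ^ k * norm (s y)) ` UNIV))"
proof -
  let ?g = "\<lambda>i k. cnj (fourier (\<lambda>x. complex_of_real (f i x)) k) * charfun M \<xi> k"
  have factors: "\<And>i. i \<in> {1..n} \<Longrightarrow> rapidly_decreasing (?g i)"
    using rapidly_decreasing_smooth_factor[OF assms(2) assms(4,5)] by blast
  have "rapidly_decreasing s"
    unfolding assms(6) using factors assms(1) by (rule rapidly_decreasing_bigconv)
  moreover have "fourier s x = (\<Prod>i=1..n. complex_of_real (\<integral>\<omega>. f i (x + \<xi> \<omega>) \<partial>M))" for x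
  proof -
    have "fourier s x = (\<Prod>i=1..n. fourier (?g i) x)"
      unfolding assms(6) using factors assms(1) by (rule fourier_bigconv)
    then show ?thesis
      using fourier_smooth_factor[OF assms(2) assms(4,5)] by simp
  qed
  ultimately show ?thesis
    by (auto simp: integrable_rapidly_decreasing bdd_above_def dest: rapidly_decreasingD)
qed

end
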